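(* Let $\mathcal{L}=(\mathrm{Fm},\vdash)$ be a logic and $N\subseteq\mathrm{Fm}\times\mathrm{Fm}$ a normative system, and let $P^c_N=(\mathrm{Fm}\times\mathrm{Fm})\setminus P_N$. 1. If $\bot_P$ and $\top_W$ hold, $P^c_N$ is closed under $(\top)^{\rhd}$ iff $(\top,\psi)\in N$ for some $\psi\in\mathrm{Fm}$. 2. If $\bot_P$ and $\top_W$ hold and $N$ is closed under (WO), then $N$ is closed under $(\top)$ iff $P^c_N$ is closed under $(\top)^{\rhd}$. 3. If $\bot_P$ and $\top_W$ hold, $P^c_N$ is closed under $(\bot)^{\rhd}$ iff $(\bot,\psi)\in N$ for some $\psi$ with $Cn(\psi)=\mathrm{Fm}$. 4. If $\bot_P$ and $\top_W$ hold and $N$ is closed under (WO), then $N$ is closed under $(\bot)$ iff $P^c_N$ is closed under $(\bot)^{\rhd}$. 5. $P^c_N$ is closed under $(\mathrm{WO})^{\rhd}$. 6. If $N$ is closed under (SI), then $P^c_N$ is closed under $(\mathrm{SI})^{\rhd}$. 7. If $\bot_P,\top_P,\neg_I,\neg_A,\neg_P$ hold and $N$ is closed under (WO), then $N$ is closed under (SI) iff $P^c_N$ is closed under $(\mathrm{SI})^{\rhd}$. 8. If $\wedge_P$ and $\vee_S$ hold and $N$ is closed under (AND), then $P^c_N$ is closed under $(\mathrm{AND})^{\rhd}$. 9. If $\bot_P,\top_P,\neg_I,\neg_A,\neg_P$ hold and $N$ is closed under (WO), then $N$ is closed under (AND) iff $P^c_N$ is closed under $(\mathrm{AND})^{\rhd}$.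 10. If $\vee_S$ holds and $N$ is closed under (OR) and (WO), then $P^c_N$ is closed under $(\mathrm{OR})^{\rhd}$. 11. If $\bot_P,\top_P,\neg_I,\neg_A,\neg_P$ hold and $N$ is closed under (WO), then $N$ is closed under (OR) iff $P^c_N$ is closed under $(\mathrm{OR})^{\rhd}$. 12. If $N$ is closed under (CT), then $P^c_N$ is closed under $(\mathrm{CT})^{\rhd}$. 13. If $\bot_P,\top_P,\neg_I,\neg_A,\neg_P$ hold and $N$ is closed under (WO), then $N$ is closed under (CT) iff $P^c_N$ is closed under $(\mathrm{CT})^{\rhd}$.
   Context: A logic $\mathcal{L}=(\mathrm{Fm},\vdash)$: $\mathrm{Fm}$ a formula algebra, $\vdash\subseteq\mathcal{P}(\mathrm{Fm})\times\mathrm{Fm}$ a consequence relation (reflexive, monotone, cut); $Cn(\Gamma)=\{\psi\mid\Gamma\vdash\psi\}$, $Cn(\varphi)=Cn(\{\varphi\})$, $Cn(\Gamma,\varphi)=Cn(\Gamma\cup\{\varphi\})$, $Cn(\varphi,\psi)=Cn(\{\varphi,\psi\})$; $\varphi\vdash\psi$ means $\{\varphi\}\vdash\psi$. Metalogical properties (each asserts existence of a term, then denoted by the symbol): $\wedge_P$: $Cn(\varphi\wedge\psi)=Cn(\{\varphi,\psi\})$; $\vee_P$: $Cn(\varphi\vee\psi)=Cn(\varphi)\cap Cn(\psi)$; $\vee_S$: $Cn(\Gamma,\varphi\vee\psi)=Cn(\Gamma,\varphi)\cap Cn(\Gamma,\psi)$ for all $\Gamma$; $\bot_P$: $Cn(\bot)=\mathrm{Fm}$;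 $\top_W$: $\top\in Cn(\varphi)$ for all $\varphi$; $\top_P$: $Cn(\top)=Cn(\varnothing)$; $\neg_W$: unary $\neg$ with $\psi\in Cn(\varphi)\Rightarrow\neg\varphi\in Cn(\neg\psi)$. For a term $\neg$ with $\neg_W$ (asserting the following includes $\neg_W$): $\neg_I$: $Cn(\neg\neg\varphi)=Cn(\varphi)$; $\neg_A$: $Cn(\varphi,\neg\varphi)=\mathrm{Fm}$; $\neg_P$: $\wedge_P$ holds and $\neg\psi\in Cn(\varphi,\neg(\varphi\wedge\psi))$. Standing convention: a rule mentioning $\wedge,\vee,\top,\bot$ is only considered when the logic has the corresponding property ($\wedge_P$, $\vee_P$, $\top_W$, $\bot_P$) with that term. A normative system is $N\subseteq\mathrm{Fm}\times\mathrm{Fm}$. Closure rules for $N$ (closed under a rule = the conclusion belongs to $N$ whenever the premises do): $(\top)$: $(\top,\top)\in N$; $(\bot)$: $(\bot,\bot)\in N$; (SI): $(\alpha,\varphi)\in N,\ \beta\vdash\alpha\Rightarrow(\beta,\varphi)\in N$; (WO): $(\alpha,\varphi)\in N,\ \varphi\vdash\psi\Rightarrow(\alpha,\psi)\in N$; (AND): $(\alpha,\varphi),(\alpha,\psi)\in N\Rightarrow(\alpha,\varphi\wedge\psi)\in N$; (OR): $(\alpha,\varphi),(\beta,\varphi)\in N\Rightarrow(\alpha\vee\beta,\varphi)\in N$; (CT): $(\alpha,\varphi)\in N,(\alpha\wedge\varphi,\psi)\in N\Rightarrow(\alpha,\psi)\in N$. $P_N=\{(\alpha,\varphi)\mid\forall\psi((\alpha,\psi)\in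 N\Rightarrow Cn(\varphi,\psi)\neq\mathrm{Fm})\}$. Closure rules for a relation $R\subseteq\mathrm{Fm}\times\mathrm{Fm}$ (here $R=P^c_N$): $(\top)^{\rhd}$: $(\top,\bot)\in R$; $(\bot)^{\rhd}$: $(\bot,\top)\in R$; $(\mathrm{SI})^{\rhd}$: $(\beta,\varphi)\in R,\ \alpha\vdash\beta\Rightarrow(\alpha,\varphi)\in R$; $(\mathrm{WO})^{\rhd}$: $(\alpha,\psi)\in R,\ \varphi\vdash\psi\Rightarrow(\alpha,\varphi)\in R$; $(\mathrm{AND})^{\rhd}$: $(\alpha,\varphi),(\alpha,\psi)\in R\Rightarrow(\alpha,\varphi\vee\psi)\in R$; $(\mathrm{OR})^{\rhd}$: $(\alpha,\varphi),(\beta,\varphi)\in R\Rightarrow(\alpha\vee\beta,\varphi)\in R$; $(\mathrm{CT})^{\rhd}$: $(\alpha,\varphi)\in N,\ (\alpha\wedge\varphi,\psi)\in R\Rightarrow(\alpha,\psi)\in R$. *)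

theory Defs
  imports Main
begin

definition consequence_relation :: "('f set \<Rightarrow> 'f \<Rightarrow> bool) \<Rightarrow> bool" where
  "consequence_relation vd \<longleftrightarrow>
     (\<forall>\<Gamma> \<phi>. \<phi> \<in> \<Gamma> \<longrightarrow> vd \<Gamma> \<phi>) \<and>
     (\<forall>\<Gamma> \<Delta> \<phi>. vd \<Gamma> \<phi> \<and> \<Gamma> \<subseteq> \<Delta> \<longrightarrow> vd \<Delta> \<phi>) \<and>
     (\<forall>\<Gamma> \<Delta> \<phi>. (\<forall>\<psi>\<in>\<Delta>. vd \<Gamma> \<psi>) \<and> vd \<Delta> \<phi> \<longrightarrow> vd \<Gamma> \<phi>)"

definition Cn :: "('f set \<Rightarrow> 'f \<Rightarrow> bool) \<Rightarrow> 'f set \<Rightarrow> 'f set" where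
  "Cn vd \<Gamma> = {\<psi>. vd \<Gamma> \<psi>}"

definition conj_P :: "('f set \<Rightarrow> 'f \<Rightarrow> bool) \<Rightarrow> ('f \<Rightarrow> 'f \<Rightarrow> 'f) \<Rightarrow> bool" where
  "conj_P vd c \<longleftrightarrow> (\<forall>\<phi> \<psi>. Cn vd {c \<phi> \<psi>} = Cn vd {\<phi>, \<psi>})"

definition disj_P :: "('f set \<Rightarrow> 'f \<Rightarrow> bool) \<Rightarrow> ('f \<Rightarrow> 'f \<Rightarrow> 'f) \<Rightarrow> bool" where
  "disj_P vd d \<longleftrightarrow> (\<forall>\<phi> \<psi>. Cn vd {d \<phi> \<psi>} = Cn vd {\<phi>} \<inter> Cn vd {\<psi>})"

definition disj_S :: "('f set \<Rightarrow> 'f \<Rightarrow> bool) \<Rightarrow> ('f \<Rightarrow> 'f \<Rightarrow> 'f) \<Rightarrow> bool" where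
  "disj_S vd d \<longleftrightarrow>
     (\<forall>\<Gamma> \<phi> \<psi>. Cn vd (\<Gamma> \<union> {d \<phi> \<psi>}) = Cn vd (\<Gamma> \<union> {\<phi>}) \<inter> Cn vd (\<Gamma> \<union> {\<psi>}))"

definition bot_P :: "('f set \<Rightarrow> 'f \<Rightarrow> bool) \<Rightarrow> 'f \<Rightarrow> bool" where
  "bot_P vd b \<longleftrightarrow> Cn vd {b} = UNIV"

definition top_W :: "('f set \<Rightarrow> 'f \<Rightarrow> bool) \<Rightarrow> 'f \<Rightarrow> bool" where
  "top_W vd t \<longleftrightarrow> (\<forall>\<phi>. t \<in> Cn vd {\<phi>})"

definition top_P :: "('f set \<Rightarrow> 'f \<Rightarrow> bool) \<Rightarrow> 'f \<Rightarrow> bool" where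
  "top_P vd t \<longleftrightarrow> Cn vd {t} = Cn vd {}"

definition neg_W :: "('f set \<Rightarrow> 'f \<Rightarrow> bool) \<Rightarrow> ('f \<Rightarrow> 'f) \<Rightarrow> bool" where
  "neg_W vd n \<longleftrightarrow> (\<forall>\<phi> \<psi>. \<psi> \<in> Cn vd {\<phi>} \<longrightarrow> n \<phi> \<in> Cn vd {n \<psi>})"

definition neg_I :: "('f set \<Rightarrow> 'f \<Rightarrow> bool) \<Rightarrow> ('f \<Rightarrow> 'f) \<Rightarrow> bool" where
  "neg_I vd n \<longleftrightarrow> neg_W vd n \<and> (\<forall>\<phi>. Cn vd {n (n \<phi>)} = Cn vd {\<phi>})"

definition neg_A :: "('f set \<Rightarrow> 'f \<Rightarrow> bool) \<Rightarrow> ('f \<Rightarrow> 'f) \<Rightarrow> bool" where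
  "neg_A vd n \<longleftrightarrow> neg_W vd n \<and> (\<forall>\<phi>. Cn vd {\<phi>, n \<phi>} = UNIV)"

definition neg_P :: "('f set \<Rightarrow> 'f \<Rightarrow> bool) \<Rightarrow> ('f \<Rightarrow> 'f) \<Rightarrow> ('f \<Rightarrow> 'f \<Rightarrow> 'f) \<Rightarrow> bool" where
  "neg_P vd n c \<longleftrightarrow> neg_W vd n \<and> conj_P vd c \<and>
     (\<forall>\<phi> \<psi>. n \<psi> \<in> Cn vd {\<phi>, n (c \<phi> \<psi>)})"

definition P_N :: "('f set \<Rightarrow> 'f \<Rightarrow> bool) \<Rightarrow> ('f \<times> 'f) set \<Rightarrow> ('f \<times> 'f) set" where
  "P_N vd N = {(\<alpha>, \<phi>). \<forall>\<psi>. (\<alpha>, \<psi>) \<in> N \<longrightarrow> Cn vd {\<phi>, \<psi>} \<noteq> UNIV}"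

definition Pc_N :: "('f set \<Rightarrow> 'f \<Rightarrow> bool) \<Rightarrow> ('f \<times> 'f) set \<Rightarrow> ('f \<times> 'f) set" where
  "Pc_N vd N = UNIV - P_N vd N"

definition closed_top :: "('f \<times> 'f) set \<Rightarrow> 'f \<Rightarrow> bool" where
  "closed_top N t \<longleftrightarrow> (t, t) \<in> N"

definition closed_bot :: "('f \<times> 'f) set \<Rightarrow> 'f \<Rightarrow> bool" where
  "closed_bot N b \<longleftrightarrow> (b, b) \<in> N"

definition closed_SI :: "('f set \<Rightarrow> 'f \<Rightarrow> bool) \<Rightarrow> ('f \<times> 'f) set \<Rightarrow> bool" where
  "closed_SI vd N \<longleftrightarrow> (\<forall>\<alpha> \<beta> \<phi>. (\<alpha>, \<phi>) \<in> N \<and> vd {\<beta>} \<alpha> \<longrightarrow> (\<beta>, \<phi>) \<in> N)"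

definition closed_WO :: "('f set \<Rightarrow> 'f \<Rightarrow> bool) \<Rightarrow> ('f \<times> 'f) set \<Rightarrow> bool" where
  "closed_WO vd N \<longleftrightarrow> (\<forall>\<alpha> \<phi> \<psi>. (\<alpha>, \<phi>) \<in> N \<and> vd {\<phi>} \<psi> \<longrightarrow> (\<alpha>, \<psi>) \<in> N)"

definition closed_AND :: "('f \<times> 'f) set \<Rightarrow> ('f \<Rightarrow> 'f \<Rightarrow> 'f) \<Rightarrow> bool" where
  "closed_AND N c \<longleftrightarrow> (\<forall>\<alpha> \<phi> \<psi>. (\<alpha>, \<phi>) \<in> N \<and> (\<alpha>, \<psi>) \<in> N \<longrightarrow> (\<alpha>, c \<phi> \<psi>) \<in> N)"

definition closed_OR :: "('f \<times> 'f) set \<Rightarrow> ('f \<Rightarrow> 'f \<Rightarrow> 'f) \<Rightarrow> bool" where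
  "closed_OR N d \<longleftrightarrow> (\<forall>\<alpha> \<beta> \<phi>. (\<alpha>, \<phi>) \<in> N \<and> (\<beta>, \<phi>) \<in> N \<longrightarrow> (d \<alpha> \<beta>, \<phi>) \<in> N)"

definition closed_CT :: "('f \<times> 'f) set \<Rightarrow> ('f \<Rightarrow> 'f \<Rightarrow> 'f) \<Rightarrow> bool" where
  "closed_CT N c \<longleftrightarrow> (\<forall>\<alpha> \<phi> \<psi>. (\<alpha>, \<phi>) \<in> N \<and> (c \<alpha> \<phi>, \<psi>) \<in> N \<longrightarrow> (\<alpha>, \<psi>) \<in> N)"

definition closed_top_d :: "('f \<times> 'f) set \<Rightarrow> 'f \<Rightarrow> 'f \<Rightarrow> bool" where
  "closed_top_d R t b \<longleftrightarrow> (t, b) \<in> R"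

definition closed_bot_d :: "('f \<times> 'f) set \<Rightarrow> 'f \<Rightarrow> 'f \<Rightarrow> bool" where
  "closed_bot_d R b t \<longleftrightarrow> (b, t) \<in> R"

definition closed_SI_d :: "('f set \<Rightarrow> 'f \<Rightarrow> bool) \<Rightarrow> ('f \<times> 'f) set \<Rightarrow> bool" where
  "closed_SI_d vd R \<longleftrightarrow> (\<forall>\<alpha> \<beta> \<phi>. (\<beta>, \<phi>) \<in> R \<and> vd {\<alpha>} \<beta> \<longrightarrow> (\<alpha>, \<phi>) \<in> R)"

definition closed_WO_d :: "('f set \<Rightarrow> 'f \<Rightarrow> bool) \<Rightarrow> ('f \<times> 'f) set \<Rightarrow> bool" where
  "closed_WO_d vd R \<longleftrightarrow> (\<forall>\<alpha> \<phi> \<psi>. (\<alpha>, \<psi>) \<in> R \<and> vd {\<phi>} \<psi> \<longrightarrow> (\<alpha>, \<phi>) \<in> R)"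

definition closed_AND_d :: "('f \<times> 'f) set \<Rightarrow> ('f \<Rightarrow> 'f \<Rightarrow> 'f) \<Rightarrow> bool" where
  "closed_AND_d R d \<longleftrightarrow> (\<forall>\<alpha> \<phi> \<psi>. (\<alpha>, \<phi>) \<in> R \<and> (\<alpha>, \<psi>) \<in> R \<longrightarrow> (\<alpha>, d \<phi> \<psi>) \<in> R)"

definition closed_OR_d :: "('f \<times> 'f) set \<Rightarrow> ('f \<Rightarrow> 'f \<Rightarrow> 'f) \<Rightarrow> bool" where
  "closed_OR_d R d \<longleftrightarrow> (\<forall>\<alpha> \<beta> \<phi>. (\<alpha>, \<phi>) \<in> R \<and> (\<beta>, \<phi>) \<in> R \<longrightarrow> (d \<alpha> \<beta>, \<phi>) \<in> R)"

definition closed_CT_d :: "('f \<times> 'f) set \<Rightarrow> ('f \<times> 'f) set \<Rightarrow> ('f \<Rightarrow> 'f \<Rightarrow> 'f) \<Rightarrow> bool" where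
  "closed_CT_d N R c \<longleftrightarrow> (\<forall>\<alpha> \<phi> \<psi>. (\<alpha>, \<phi>) \<in> N \<and> (c \<alpha> \<phi>, \<psi>) \<in> R \<longrightarrow> (\<alpha>, \<psi>) \<in> R)"

end

theory Submission
  imports Defs
begin

(* A pair (\<alpha>, \<phi>) lies in P^c_N exactly when some \<psi> with (\<alpha>, \<psi>) \<in> N is inconsistent
   with \<phi>. From this description the one-way transfers of (WO), (SI), (AND), (OR) and (CT)
   follow by structural reasoning; for the top and bottom rules one uses that \<bottom> is inconsistent
   with every formula and \<top> only with inconsistent ones.
   For the converses, classical negation makes {\<phi>, \<psi>} inconsistent iff \<phi> \<turnstile> \<not>\<psi>, so for N
   closed under (WO) one gets P^c_N = {(\<alpha>, \<phi>). (\<alpha>, \<not>\<phi>) \<in> N}. As \<not> is involutive up to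
   equivalence, each dual rule on P^c_N is the original rule on N transported along \<not>;
   for (AND) the transport turns \<or> into \<and> by De Morgan's laws. *)

lemma Pc_N_iff: "(\<alpha>, \<phi>) \<in> Pc_N vd N \<longleftrightarrow> (\<exists>\<psi>. (\<alpha>, \<psi>) \<in> N \<and> Cn vd {\<phi>, \<psi>} = UNIV)"
  unfolding Pc_N_def P_N_def by auto

lemma closed_WOD: "closed_WO vd N \<Longrightarrow> (\<alpha>, \<phi>) \<in> N \<Longrightarrow> vd {\<phi>} \<psi> \<Longrightarrow> (\<alpha>, \<psi>) \<in> N"
  unfolding closed_WO_def by blast

lemma disj_S_imp_disj_P: "disj_S vd d \<Longrightarrow> disj_P vd d"
  unfolding disj_S_def disj_P_def by (metis Un_empty_left)

lemma disj_P_derives_iff: "disj_P vd d \<Longrightarrow> vd {d \<phi> \<psi>} \<chi> \<longleftrightarrow> vd {\<phi>} \<chi> \<and> vd {\<psi>} \<chi>"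
  unfolding disj_P_def Cn_def by blast

lemma disj_S_explosive:
  assumes "disj_S vd d" and "Cn vd (insert \<phi> \<Gamma>) = UNIV" and "Cn vd (insert \<psi> \<Gamma>) = UNIV"
  shows "Cn vd (insert (d \<phi> \<psi>) \<Gamma>) = UNIV"
  using assms unfolding disj_S_def by (metis Int_absorb Un_insert_right sup_bot.right_neutral)

lemma closed_SI_d_Pc_N: "closed_SI vd N \<Longrightarrow> closed_SI_d vd (Pc_N vd N)"
  unfolding closed_SI_def closed_SI_d_def Pc_N_iff by blast

lemma closed_CT_d_Pc_N: "closed_CT N c \<Longrightarrow> closed_CT_d N (Pc_N vd N) c"
  unfolding closed_CT_def closed_CT_d_def Pc_N_iff by blast

lemma closed_WO_ex_iff_top:
  assumes "top_W vd verum" and "closed_WO vd N"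
  shows "(\<exists>\<psi>. (\<alpha>, \<psi>) \<in> N) \<longleftrightarrow> (\<alpha>, verum) \<in> N"
  using assms unfolding top_W_def Cn_def by (blast intro: closed_WOD)

lemma closed_WO_ex_explosive_iff_bot:
  assumes "bot_P vd falsum" and "closed_WO vd N"
  shows "(\<exists>\<psi>. (\<alpha>, \<psi>) \<in> N \<and> Cn vd {\<psi>} = UNIV) \<longleftrightarrow> (\<alpha>, falsum) \<in> N"
  using assms unfolding bot_P_def Cn_def by (blast intro: closed_WOD)

locale logic =
  fixes vd :: "'f set \<Rightarrow> 'f \<Rightarrow> bool"
  assumes consequence_relation: "consequence_relation vd"
begin

lemma derives_assm: "\<phi> \<in> \<Gamma> \<Longrightarrow> vd \<Gamma> \<phi>"
  using consequence_relation unfolding consequence_relation_def by blast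

lemma derives_mono: "vd \<Gamma> \<phi> \<Longrightarrow> \<Gamma> \<subseteq> \<Delta> \<Longrightarrow> vd \<Delta> \<phi>"
  using consequence_relation unfolding consequence_relation_def by blast

lemma derives_cut:
  assumes "\<And>\<psi>. \<psi> \<in> \<Delta> \<Longrightarrow> vd \<Gamma> \<psi>" and "vd \<Delta> \<phi>"
  shows "vd \<Gamma> \<phi>"
proof -
  have "\<forall>\<psi>\<in>\<Delta>. vd \<Gamma> \<psi>"
    using assms(1) by blast
  with assms(2) show ?thesis
    using consequence_relation unfolding consequence_relation_def by blast
qed

lemma derives_insert_cut: "vd \<Gamma> \<psi> \<Longrightarrow> vd (insert \<psi> \<Gamma>) \<phi> \<Longrightarrow> vd \<Gamma> \<phi>"
  by (rule derives_cut[of "insert \<psi> \<Gamma>"]) (auto intro: derives_assm)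

lemma derives_trans: "vd \<Gamma> \<psi> \<Longrightarrow> vd {\<psi>} \<phi> \<Longrightarrow> vd \<Gamma> \<phi>"
  by (rule derives_cut[of "{\<psi>}"]) auto

lemma Cn_insert_derivable: "vd \<Gamma> \<psi> \<Longrightarrow> Cn vd (insert \<psi> \<Gamma>) = Cn vd \<Gamma>"
  unfolding Cn_def by (auto intro: derives_insert_cut derives_mono)

lemma Cn_eq_UNIV_cut:
  assumes "Cn vd \<Gamma> = UNIV" and "\<And>\<psi>. \<psi> \<in> \<Gamma> \<Longrightarrow> vd \<Delta> \<psi>"
  shows "Cn vd \<Delta> = UNIV"
  using assms unfolding Cn_def by (blast intro: derives_cut)

lemma conj_P_derives_iff:
  assumes "conj_P vd c"
  shows "vd \<Gamma> (c \<phi> \<psi>) \<longleftrightarrow> vd \<Gamma> \<phi> \<and> vd \<Gamma> \<psi>"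
proof -
  have Cn_conj: "Cn vd {c \<phi> \<psi>} = Cn vd {\<phi>, \<psi>}"
    using assms unfolding conj_P_def by blast
  then have "vd {c \<phi> \<psi>} \<phi>" and "vd {c \<phi> \<psi>} \<psi>" and "vd {\<phi>, \<psi>} (c \<phi> \<psi>)"
    unfolding Cn_def set_eq_iff by (auto intro: derives_assm)
  then show ?thesis
    by (auto intro: derives_trans derives_cut[of "{\<phi>, \<psi>}"])
qed

lemma closed_top_d_Pc_N_iff:
  assumes "bot_P vd falsum"
  shows "closed_top_d (Pc_N vd N) verum falsum \<longleftrightarrow> (\<exists>\<psi>. (verum, \<psi>) \<in> N)"
proof -
  have "Cn vd {falsum, \<psi>} = UNIV" for \<psi>
    using assms unfolding bot_P_def Cn_def by (auto intro: derives_mono)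
  then show ?thesis
    unfolding closed_top_d_def Pc_N_iff by blast
qed

lemma closed_bot_d_Pc_N_iff:
  assumes "top_W vd verum"
  shows "closed_bot_d (Pc_N vd N) falsum verum \<longleftrightarrow> (\<exists>\<psi>. (falsum, \<psi>) \<in> N \<and> Cn vd {\<psi>} = UNIV)"
proof -
  have "Cn vd {verum, \<psi>} = Cn vd {\<psi>}" for \<psi>
    using assms Cn_insert_derivable[of "{\<psi>}" verum] unfolding top_W_def Cn_def by simp
  then show ?thesis
    unfolding closed_bot_d_def Pc_N_iff by simp
qed

lemma closed_WO_d_Pc_N: "closed_WO_d vd (Pc_N vd N)"
  unfolding closed_WO_d_def
proof (intro allI impI, elim conjE)
  fix \<alpha> \<phi> \<phi>'
  assume "(\<alpha>, \<phi>') \<in> Pc_N vd N" and "vd {\<phi>} \<phi>'"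
  then obtain \<psi> where \<psi>: "(\<alpha>, \<psi>) \<in> N" "Cn vd {\<phi>', \<psi>} = UNIV" "vd {\<phi>, \<psi>} \<phi>'"
    unfolding Pc_N_iff by (blast intro: derives_mono)
  moreover have "Cn vd {\<phi>, \<psi>} = UNIV"
    by (rule Cn_eq_UNIV_cut[OF \<psi>(2)]) (use \<psi>(3) in \<open>auto intro: derives_assm\<close>)
  ultimately show "(\<alpha>, \<phi>) \<in> Pc_N vd N"
    unfolding Pc_N_iff by blast
qed

lemma closed_AND_d_Pc_N:
  assumes "conj_P vd c" and "disj_S vd d" and "closed_AND N c"
  shows "closed_AND_d (Pc_N vd N) d"
  unfolding closed_AND_d_def
proof (intro allI impI, elim conjE)
  fix \<alpha> \<phi> \<chi>
  assume "(\<alpha>, \<phi>) \<in> Pc_N vd N" and "(\<alpha>, \<chi>) \<in> Pc_N vd N"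
  then obtain \<psi>\<^sub>1 \<psi>\<^sub>2 where
    \<psi>: "(\<alpha>, \<psi>\<^sub>1) \<in> N" "Cn vd {\<phi>, \<psi>\<^sub>1} = UNIV" "(\<alpha>, \<psi>\<^sub>2) \<in> N" "Cn vd {\<chi>, \<psi>\<^sub>2} = UNIV"
    unfolding Pc_N_iff by blast
  have conjuncts: "vd {c \<psi>\<^sub>1 \<psi>\<^sub>2} \<psi>\<^sub>1" "vd {c \<psi>\<^sub>1 \<psi>\<^sub>2} \<psi>\<^sub>2"
    using conj_P_derives_iff[OF assms(1)] derives_assm by (meson singletonI)+
  have "Cn vd {\<phi>, c \<psi>\<^sub>1 \<psi>\<^sub>2} = UNIV"
    by (rule Cn_eq_UNIV_cut[OF \<psi>(2)]) (auto intro: derives_assm derives_mono[OF conjuncts(1)])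
  moreover have "Cn vd {\<chi>, c \<psi>\<^sub>1 \<psi>\<^sub>2} = UNIV"
    by (rule Cn_eq_UNIV_cut[OF \<psi>(4)]) (auto intro: derives_assm derives_mono[OF conjuncts(2)])
  ultimately have "Cn vd {d \<phi> \<chi>, c \<psi>\<^sub>1 \<psi>\<^sub>2} = UNIV"
    using assms(2) by (rule disj_S_explosive[rotated])
  moreover have "(\<alpha>, c \<psi>\<^sub>1 \<psi>\<^sub>2) \<in> N"
    using \<psi>(1,3) assms(3) unfolding closed_AND_def by blast
  ultimately show "(\<alpha>, d \<phi> \<chi>) \<in> Pc_N vd N"
    unfolding Pc_N_iff by blast
qed

lemma closed_OR_d_Pc_N:
  assumes "disj_S vd d" and "closed_OR N d" and "closed_WO vd N"
  shows "closed_OR_d (Pc_N vd N) d"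
  unfolding closed_OR_d_def
proof (intro allI impI, elim conjE)
  fix \<alpha> \<beta> \<phi>
  assume "(\<alpha>, \<phi>) \<in> Pc_N vd N" and "(\<beta>, \<phi>) \<in> Pc_N vd N"
  then obtain \<psi>\<^sub>1 \<psi>\<^sub>2 where
    \<psi>: "(\<alpha>, \<psi>\<^sub>1) \<in> N" "Cn vd {\<phi>, \<psi>\<^sub>1} = UNIV" "(\<beta>, \<psi>\<^sub>2) \<in> N" "Cn vd {\<phi>, \<psi>\<^sub>2} = UNIV"
    unfolding Pc_N_iff by blast
  have "vd {\<psi>\<^sub>1} (d \<psi>\<^sub>1 \<psi>\<^sub>2)" and "vd {\<psi>\<^sub>2} (d \<psi>\<^sub>1 \<psi>\<^sub>2)"
    using disj_P_derives_iff[OF disj_S_imp_disj_P[OF assms(1)]] derives_assm by (meson singletonI)+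
  with \<psi> have "(\<alpha>, d \<psi>\<^sub>1 \<psi>\<^sub>2) \<in> N" and "(\<beta>, d \<psi>\<^sub>1 \<psi>\<^sub>2) \<in> N"
    using assms(3) by (blast intro: closed_WOD)+
  then have "(d \<alpha> \<beta>, d \<psi>\<^sub>1 \<psi>\<^sub>2) \<in> N"
    using assms(2) unfolding closed_OR_def by blast
  moreover have "Cn vd {\<phi>, d \<psi>\<^sub>1 \<psi>\<^sub>2} = UNIV"
    using disj_S_explosive[OF assms(1), of \<psi>\<^sub>1 "{\<phi>}" \<psi>\<^sub>2] \<psi> by (simp add: insert_commute)
  ultimately show "(d \<alpha> \<beta>, \<phi>) \<in> Pc_N vd N"
    unfolding Pc_N_iff by blast
qed

end

locale classical_negation = logic +
  fixes verum :: 'f and neg :: "'f \<Rightarrow> 'f" and conj :: "'f \<Rightarrow> 'f \<Rightarrow> 'f"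
  assumes top_P: "top_P vd verum"
    and neg_I: "neg_I vd neg"
    and neg_A: "neg_A vd neg"
    and neg_P: "neg_P vd neg conj"
begin

lemma conj_P: "conj_P vd conj"
  using neg_P unfolding neg_P_def by blast

lemma neg_contrapos: "vd {\<phi>} \<psi> \<Longrightarrow> vd {neg \<psi>} (neg \<phi>)"
  using neg_P unfolding neg_P_def neg_W_def Cn_def by blast

lemma derives_neg_neg: "vd {\<phi>} (neg (neg \<phi>))"
  using neg_I derives_assm unfolding neg_I_def Cn_def set_eq_iff by blast

lemma neg_neg_derives: "vd {neg (neg \<phi>)} \<phi>"
  using neg_I derives_assm unfolding neg_I_def Cn_def set_eq_iff by blast

lemma explosive_iff_derives_neg: "Cn vd {\<phi>, \<psi>} = UNIV \<longleftrightarrow> vd {\<phi>} (neg \<psi>)"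
proof
  assume "Cn vd {\<phi>, \<psi>} = UNIV"
  then have "vd {conj \<phi> \<psi>} (neg verum)"
    using conj_P unfolding conj_P_def Cn_def by blast
  then have "vd {neg (neg verum)} (neg (conj \<phi> \<psi>))"
    by (rule neg_contrapos)
  moreover have "Cn vd {neg (neg verum)} = Cn vd {}"
    using neg_I top_P unfolding neg_I_def top_P_def by simp
  ultimately have "vd {\<phi>} (neg (conj \<phi> \<psi>))"
    unfolding Cn_def by (blast intro: derives_mono)
  moreover have "vd {\<phi>, neg (conj \<phi> \<psi>)} (neg \<psi>)"
    using neg_P unfolding neg_P_def Cn_def by blast
  ultimately show "vd {\<phi>} (neg \<psi>)"
    by (simp add: insert_commute derives_insert_cut)
next
  assume "vd {\<phi>} (neg \<psi>)"
  then have "vd {\<phi>, \<psi>} (neg \<psi>)"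
    by (rule derives_mono) auto
  moreover have "vd {\<psi>, neg \<psi>} \<chi>" for \<chi>
    using neg_A unfolding neg_A_def Cn_def by blast
  then have "vd {neg \<psi>, \<phi>, \<psi>} \<chi>" for \<chi>
    by (rule derives_mono) auto
  ultimately show "Cn vd {\<phi>, \<psi>} = UNIV"
    unfolding Cn_def by (blast intro: derives_insert_cut)
qed

lemma derives_neg_commute: "vd {\<phi>} (neg \<psi>) \<Longrightarrow> vd {\<psi>} (neg \<phi>)"
  by (metis explosive_iff_derives_neg insert_commute)

lemma Pc_N_iff_neg:
  assumes "closed_WO vd N"
  shows "(\<alpha>, \<phi>) \<in> Pc_N vd N \<longleftrightarrow> (\<alpha>, neg \<phi>) \<in> N"
proof
  assume "(\<alpha>, \<phi>) \<in> Pc_N vd N"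
  then obtain \<psi> where "(\<alpha>, \<psi>) \<in> N" and "vd {\<psi>} (neg \<phi>)"
    unfolding Pc_N_iff by (metis explosive_iff_derives_neg insert_commute)
  then show "(\<alpha>, neg \<phi>) \<in> N"
    using assms by (rule closed_WOD[rotated])
next
  assume "(\<alpha>, neg \<phi>) \<in> N"
  moreover have "Cn vd {\<phi>, neg \<phi>} = UNIV"
    using neg_A unfolding neg_A_def by blast
  ultimately show "(\<alpha>, \<phi>) \<in> Pc_N vd N"
    unfolding Pc_N_iff by blast
qed

lemma neg_neg_in_N_iff:
  assumes "closed_WO vd N"
  shows "(\<alpha>, neg (neg \<phi>)) \<in> N \<longleftrightarrow> (\<alpha>, \<phi>) \<in> N"
  using assms derives_neg_neg neg_neg_derives by (blast intro: closed_WOD)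

lemma closed_SI_iff_closed_SI_d:
  assumes "closed_WO vd N"
  shows "closed_SI vd N \<longleftrightarrow> closed_SI_d vd (Pc_N vd N)"
  unfolding closed_SI_def closed_SI_d_def Pc_N_iff_neg[OF assms]
  by (metis neg_neg_in_N_iff[OF assms])

lemma closed_OR_iff_closed_OR_d:
  assumes "closed_WO vd N"
  shows "closed_OR N d \<longleftrightarrow> closed_OR_d (Pc_N vd N) d"
  unfolding closed_OR_def closed_OR_d_def Pc_N_iff_neg[OF assms]
  by (metis neg_neg_in_N_iff[OF assms])

lemma closed_CT_iff_closed_CT_d:
  assumes "closed_WO vd N"
  shows "closed_CT N c \<longleftrightarrow> closed_CT_d N (Pc_N vd N) c"
  unfolding closed_CT_def closed_CT_d_def Pc_N_iff_neg[OF assms]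
  by (metis neg_neg_in_N_iff[OF assms])

lemma neg_disj_derives_conj_neg:
  assumes "disj_P vd d"
  shows "vd {neg (d \<phi> \<psi>)} (conj (neg \<phi>) (neg \<psi>))"
proof -
  have "vd {\<phi>} (d \<phi> \<psi>)" and "vd {\<psi>} (d \<phi> \<psi>)"
    using disj_P_derives_iff[OF assms] derives_assm by (meson singletonI)+
  then show ?thesis
    by (simp add: conj_P_derives_iff[OF conj_P] neg_contrapos)
qed

lemma conj_neg_derives_neg_disj:
  assumes "disj_P vd d"
  shows "vd {conj (neg \<phi>) (neg \<psi>)} (neg (d \<phi> \<psi>))"
proof -
  let ?c = "conj (neg \<phi>) (neg \<psi>)"
  have "vd {?c} (neg \<phi>)" and "vd {?c} (neg \<psi>)"
    using conj_P_derives_iff[OF conj_P] derives_assm by (meson singletonI)+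
  then have "vd {\<phi>} (neg ?c)" and "vd {\<psi>} (neg ?c)"
    by (blast intro: derives_neg_commute)+
  then have "vd {d \<phi> \<psi>} (neg ?c)"
    by (simp add: disj_P_derives_iff[OF assms])
  then have "vd {neg (neg ?c)} (neg (d \<phi> \<psi>))"
    by (rule neg_contrapos)
  with derives_neg_neg show ?thesis
    by (rule derives_trans)
qed

lemma closed_AND_iff_closed_AND_d:
  assumes "disj_P vd d" and "closed_WO vd N"
  shows "closed_AND N conj \<longleftrightarrow> closed_AND_d (Pc_N vd N) d"
proof
  assume AND: "closed_AND N conj"
  show "closed_AND_d (Pc_N vd N) d"
    unfolding closed_AND_d_def Pc_N_iff_neg[OF assms(2)]
  proof (intro allI impI)
    fix \<alpha> \<phi> \<psi>
    assume "(\<alpha>, neg \<phi>) \<in> N \<and> (\<alpha>, neg \<psi>) \<in> N"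
    then have "(\<alpha>, conj (neg \<phi>) (neg \<psi>)) \<in> N"
      using AND unfolding closed_AND_def by blast
    then show "(\<alpha>, neg (d \<phi> \<psi>)) \<in> N"
      using assms conj_neg_derives_neg_disj by (blast intro: closed_WOD)
  qed
next
  assume AND_d: "closed_AND_d (Pc_N vd N) d"
  show "closed_AND N conj"
    unfolding closed_AND_def
  proof (intro allI impI)
    fix \<alpha> \<phi> \<psi>
    assume "(\<alpha>, \<phi>) \<in> N \<and> (\<alpha>, \<psi>) \<in> N"
    then have "(\<alpha>, neg \<phi>) \<in> Pc_N vd N" and "(\<alpha>, neg \<psi>) \<in> Pc_N vd N"
      by (simp_all add: Pc_N_iff_neg neg_neg_in_N_iff assms(2))
    then have "(\<alpha>, neg (d (neg \<phi>) (neg \<psi>))) \<in> N"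
      using AND_d Pc_N_iff_neg[OF assms(2)] unfolding closed_AND_d_def by blast
    then have "(\<alpha>, conj (neg (neg \<phi>)) (neg (neg \<psi>))) \<in> N"
      using assms neg_disj_derives_conj_neg by (blast intro: closed_WOD)
    moreover have "vd {conj (neg (neg \<phi>)) (neg (neg \<psi>))} (conj \<phi> \<psi>)"
      using conj_P_derives_iff[OF conj_P] derives_assm neg_neg_derives
      by (meson derives_trans singletonI)
    ultimately show "(\<alpha>, conj \<phi> \<psi>) \<in> N"
      using assms(2) by (rule closed_WOD[rotated])
  qed
qed

end

theorem proposition4p5:
  fixes vd :: "'f set \<Rightarrow> 'f \<Rightarrow> bool"
    and N :: "('f \<times> 'f) set"
    and top bot :: 'f
    and conj disj :: "'f \<Rightarrow> 'f \<Rightarrow> 'f"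
    and neg :: "'f \<Rightarrow> 'f"
  assumes logic: "consequence_relation vd"
  shows
  \<comment> \<open>1\<close>
  "(bot_P vd bot \<and> top_W vd top \<longrightarrow>
      (closed_top_d (Pc_N vd N) top bot \<longleftrightarrow> (\<exists>\<psi>. (top, \<psi>) \<in> N)))
  \<comment> \<open>2\<close>
   \<and> (bot_P vd bot \<and> top_W vd top \<and> closed_WO vd N \<longrightarrow>
      (closed_top N top \<longleftrightarrow> closed_top_d (Pc_N vd N) top bot))
  \<comment> \<open>3\<close>
   \<and> (bot_P vd bot \<and> top_W vd top \<longrightarrow>
      (closed_bot_d (Pc_N vd N) bot top \<longleftrightarrow> (\<exists>\<psi>. (bot, \<psi>) \<in> N \<and> Cn vd {\<psi>} = UNIV)))
  \<comment> \<open>4\<close>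
   \<and> (bot_P vd bot \<and> top_W vd top \<and> closed_WO vd N \<longrightarrow>
      (closed_bot N bot \<longleftrightarrow> closed_bot_d (Pc_N vd N) bot top))
  \<comment> \<open>5\<close>
   \<and> closed_WO_d vd (Pc_N vd N)
  \<comment> \<open>6\<close>
   \<and> (closed_SI vd N \<longrightarrow> closed_SI_d vd (Pc_N vd N))
  \<comment> \<open>7\<close>
   \<and> (bot_P vd bot \<and> top_P vd top \<and> neg_I vd neg \<and> neg_A vd neg \<and> neg_P vd neg conj
        \<and> closed_WO vd N \<longrightarrow>
      (closed_SI vd N \<longleftrightarrow> closed_SI_d vd (Pc_N vd N)))
  \<comment> \<open>8\<close>
   \<and> (conj_P vd conj \<and> disj_S vd disj \<and> closed_AND N conj \<longrightarrow>
      closed_AND_d (Pc_N vd N) disj)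
  \<comment> \<open>9\<close>
   \<and> (bot_P vd bot \<and> top_P vd top \<and> neg_I vd neg \<and> neg_A vd neg \<and> neg_P vd neg conj
        \<and> disj_P vd disj \<and> closed_WO vd N \<longrightarrow>
      (closed_AND N conj \<longleftrightarrow> closed_AND_d (Pc_N vd N) disj))
  \<comment> \<open>10\<close>
   \<and> (disj_S vd disj \<and> closed_OR N disj \<and> closed_WO vd N \<longrightarrow>
      closed_OR_d (Pc_N vd N) disj)
  \<comment> \<open>11\<close>
   \<and> (bot_P vd bot \<and> top_P vd top \<and> neg_I vd neg \<and> neg_A vd neg \<and> neg_P vd neg conj
        \<and> disj_P vd disj \<and> closed_WO vd N \<longrightarrow>
      (closed_OR N disj \<longleftrightarrow> closed_OR_d (Pc_N vd N) disj))
  \<comment> \<open>12\<close>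
   \<and> (conj_P vd conj \<and> closed_CT N conj \<longrightarrow> closed_CT_d N (Pc_N vd N) conj)
  \<comment> \<open>13\<close>
   \<and> (bot_P vd bot \<and> top_P vd top \<and> neg_I vd neg \<and> neg_A vd neg \<and> neg_P vd neg conj
        \<and> closed_WO vd N \<longrightarrow>
      (closed_CT N conj \<longleftrightarrow> closed_CT_d N (Pc_N vd N) conj))"
proof -
  interpret logic vd
    using logic by unfold_locales
  have negation: "classical_negation vd top neg conj"
    if "top_P vd top" "neg_I vd neg" "neg_A vd neg" "neg_P vd neg conj"
    using that by unfold_locales
  show ?thesis
    unfolding closed_top_def closed_bot_def
    by (simp add: closed_top_d_Pc_N_iff closed_bot_d_Pc_N_iff
        closed_WO_ex_iff_top[of vd top] closed_WO_ex_explosive_iff_bot[of vd bot]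
        closed_WO_d_Pc_N closed_SI_d_Pc_N closed_AND_d_Pc_N[where c = conj]
        closed_OR_d_Pc_N closed_CT_d_Pc_N
        classical_negation.closed_SI_iff_closed_SI_d[OF negation]
        classical_negation.closed_AND_iff_closed_AND_d[OF negation]
        classical_negation.closed_OR_iff_closed_OR_d[OF negation]
        classical_negation.closed_CT_iff_closed_CT_d[OF negation])
qed

end
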